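(* Let $E_1,\dots,E_N$ be a symmetric sequence of events with correlation functions $G_k$ and correlation coefficients $C_k$. Then for every $k$ with $2\le k\le N$ and all $r_1,\dots,r_k\in\{0,1\}$, $$G_k(r_1,\dots,r_k)=N^{-k}C_k\prod_{l=1}^{k}(-1)^{r_l+1}.$$
   Context: $\mathbbm{1}_E$ is the indicator function of an event $E$. A finite sequence of events $E_1,\dots,E_N$ on a common probability space is called symmetric if for all $r_1,\dots,r_N\in\{0,1\}$ and all permutations $\sigma$ of $\{1,\dots,N\}$, $P(\mathbbm{1}_{E_1}=r_1,\dots,\mathbbm{1}_{E_N}=r_N)=P(\mathbbm{1}_{E_1}=r_{\sigma(1)},\dots,\mathbbm{1}_{E_N}=r_{\sigma(N)})$. For $1\le k\le N$ the probability function of order $k$ is $P_k(r_1,\dots,r_k):=\sum_{r_{k+1},\dots,r_N\in\{0,1\}}P(\mathbbm{1}_{E_1}=r_1,\dots,\mathbbm{1}_{E_N}=r_N)$. The correlation functions $G_k:\{0,1\}^k\to\mathbb{R}$ are defined by $G_1:=P_1$ and, recursively for $1<k\le N$, $$G_k(r_1,\dots,r_k):=P_k(r_1,\dots,r_k)-\sum_{\sigma}\sum_{l=1}^{k-1}\frac{1}{(l-1)!\,(k-l)!}G_l(r_1,r_{\sigma(2)},\dots,r_{\sigma(l)})\,P_{k-l}(r_{\sigma(l+1)},\dots,r_{\sigma(k)}),$$ where $\sigma$ runs over all permutations of $\{2,\dots,k\}$. The correlation coefficient of order $k$ is $C_k:=N^kG_k(1,\dots,1)$. *)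

theory Defs
  imports "HOL-Probability.Probability" "HOL-Combinatorics.Permutations"
begin

text \<open>Events are indexed by 1..N; an outcome pattern is a function r :: nat => nat
  whose values r i (i in 1..N) lie in {0,1}.\<close>

definition joint_prob :: "'a measure \<Rightarrow> (nat \<Rightarrow> 'a set) \<Rightarrow> nat \<Rightarrow> (nat \<Rightarrow> nat) \<Rightarrow> real" where
  "joint_prob M E N r =
     measure M {\<omega> \<in> space M. \<forall>i\<in>{1..N}. (of_bool (\<omega> \<in> E i) :: nat) = r i}"

definition symmetric_events :: "'a measure \<Rightarrow> (nat \<Rightarrow> 'a set) \<Rightarrow> nat \<Rightarrow> bool" where
  "symmetric_events M E N \<longleftrightarrow>
     (\<forall>r \<sigma>. (\<forall>i\<in>{1..N}. r i \<in> {0,1}) \<longrightarrow> \<sigma> permutes {1..N} \<longrightarrow>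
        joint_prob M E N r = joint_prob M E N (r \<circ> \<sigma>))"

definition prob_fun :: "'a measure \<Rightarrow> (nat \<Rightarrow> 'a set) \<Rightarrow> nat \<Rightarrow> nat \<Rightarrow> (nat \<Rightarrow> nat) \<Rightarrow> real" where
  "prob_fun M E N k r =
     (\<Sum>t\<in>{k+1..N} \<rightarrow>\<^sub>E {0,1}. joint_prob M E N (\<lambda>i. if i \<le> k then r i else t i))"

function corr_fun :: "'a measure \<Rightarrow> (nat \<Rightarrow> 'a set) \<Rightarrow> nat \<Rightarrow> nat \<Rightarrow> (nat \<Rightarrow> nat) \<Rightarrow> real" where
  "corr_fun M E N k r =
     (if k \<le> 1 then prob_fun M E N 1 r
      else prob_fun M E N k r -
        (\<Sum>\<sigma>\<in>{\<sigma>. \<sigma> permutes {2..k}}. \<Sum>l\<in>{1..k-1}.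
           1 / (fact (l - 1) * fact (k - l)) *
           corr_fun M E N l (\<lambda>i. if i = 1 then r 1 else r (\<sigma> i)) *
           prob_fun M E N (k - l) (\<lambda>i. r (\<sigma> (i + l)))))"
  by pat_completeness auto
termination
  by (relation "Wellfounded.measure (\<lambda>(M,E,N,k,r). k)") auto

declare corr_fun.simps[simp del]

definition corr_coeff :: "'a measure \<Rightarrow> (nat \<Rightarrow> 'a set) \<Rightarrow> nat \<Rightarrow> nat \<Rightarrow> real" where
  "corr_coeff M E N k = real N ^ k * corr_fun M E N k (\<lambda>_. 1)"

end

(* For 2 \<le> l \<le> N the correlation function G_l changes sign when any one of its binary
   arguments is flipped; applying this to the arguments of (r_1,...,r_k) that are 0 turns
   G_k(r) into the product of signs times G_k(1,...,1) = N^-k C_k.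

   Summed over the two values of the first
   argument, the recursion terms with l' \<ge> 2 cancel by induction and the remaining ones
   reproduce the marginal of P_l. For the last argument, the terms in which it enters G cancel by
   induction and in the others it is marginalised out of P; writing each permutation of {2..l} as
   a permutation of {2..l-1} followed by a transposition and counting, these reassemble into the
   recursion for G_(l-1), i.e. into P_(l-1), the marginal of P_l. Any other argument is moved to
   the last place by a transposition, which leaves G_l invariant because the events are
   exchangeable. *)

theory Submission
  imports Defs
begin

definition pattern_event :: "'a measure \<Rightarrow> (nat \<Rightarrow> 'a set) \<Rightarrow> (nat \<Rightarrow> nat) \<Rightarrow> nat set \<Rightarrow> 'a set" where
  "pattern_event M E f A = {\<omega> \<in> space M. \<forall>i\<in>A. (of_bool (\<omega> \<in> E i) :: nat) = f i}"

lemma pattern_event_cong: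
  "(\<And>i. i \<in> A \<Longrightarrow> f i = g i) \<Longrightarrow> pattern_event M E f A = pattern_event M E g A"
  unfolding pattern_event_def by auto

lemma pattern_event_in_sets:
  assumes "finite A" "\<And>i. i \<in> A \<Longrightarrow> E i \<in> sets M"
  shows "pattern_event M E f A \<in> sets M"
  using assms
proof (induction A rule: finite_induct)
  case empty
  then show ?case by (simp add: pattern_event_def)
next
  case (insert a A)
  have Ea: "E a \<in> sets M" using insert by auto
  have "pattern_event M E f (insert a A) = pattern_event M E f A \<inter>
      (if f a = 1 then E a else if f a = 0 then space M - E a else {})"
    using sets.sets_into_space[OF Ea] unfolding pattern_event_def by auto
  then show ?case using insert Ea by auto
qed

lemma fun_upd_comp_permutes:
  assumes "\<sigma> permutes S"
  shows "s(a := b) \<circ> \<sigma> = (s \<circ> \<sigma>)(inv \<sigma> a := b)"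
proof
  fix x
  show "(s(a := b) \<circ> \<sigma>) x = ((s \<circ> \<sigma>)(inv \<sigma> a := b)) x"
    using permutes_inv_eq[OF assms, of a x] by auto
qed

lemma permutes_in_atLeastAtMost_one:
  fixes \<sigma> :: "nat \<Rightarrow> nat"
  assumes "\<sigma> permutes {2..l}" "i \<in> {1..l}"
  shows "\<sigma> i \<in> {1..l}"
proof -
  have "\<sigma> permutes {1..l}" using assms(1) by (rule permutes_subset) auto
  then show ?thesis using assms(2) by (metis permutes_in_image)
qed

lemma sum_permutes_insert_transpose:
  fixes h :: "('a \<Rightarrow> 'a) \<Rightarrow> 'b::comm_monoid_add"
  assumes "finite S" "a \<notin> S"
  shows "(\<Sum>\<sigma>\<in>{\<sigma>. \<sigma> permutes insert a S}. h \<sigma>) =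
    (\<Sum>b\<in>insert a S. \<Sum>\<rho>\<in>{\<rho>. \<rho> permutes S}. h (\<rho> \<circ> Transposition.transpose a b))"
proof -
  have "(\<Sum>\<sigma>\<in>{\<sigma>. \<sigma> permutes insert a S}. h \<sigma>) = (\<Sum>\<sigma>\<in>{\<sigma>. \<sigma> permutes insert a S}. h (inv \<sigma>))"
    by (rule sum_permutations_inverse)
  also have "\<dots> = (\<Sum>b\<in>insert a S. \<Sum>\<rho>\<in>{\<rho>. \<rho> permutes S}. h (inv (Transposition.transpose a b \<circ> \<rho>)))"
    using assms by (rule sum_over_permutations_insert)
  also have "\<dots> = (\<Sum>b\<in>insert a S. \<Sum>\<rho>\<in>{\<rho>. \<rho> permutes S}. h (inv \<rho> \<circ> Transposition.transpose a b))"
    by (intro sum.cong refl) (simp add: o_inv_distrib permutes_bij)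
  also have "\<dots> = (\<Sum>b\<in>insert a S. \<Sum>\<rho>\<in>{\<rho>. \<rho> permutes S}. h (\<rho> \<circ> Transposition.transpose a b))"
  proof (rule sum.cong[OF refl])
    fix b
    show "(\<Sum>\<rho>\<in>{\<rho>. \<rho> permutes S}. h (inv \<rho> \<circ> Transposition.transpose a b)) =
        (\<Sum>\<rho>\<in>{\<rho>. \<rho> permutes S}. h (\<rho> \<circ> Transposition.transpose a b))"
      using sum_permutations_inverse[of "\<lambda>\<rho>. h (\<rho> \<circ> Transposition.transpose a b)" S] by simp
  qed
  finally show ?thesis .
qed

lemma fact_diff_ratio:
  assumes "1 \<le> l'" "l' < l"
  shows "real (l - l') * (x / (fact (l' - 1) * fact (l - l'))) = x / (fact (l' - 1) * fact (l - 1 - l'))"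
proof -
  have e: "l - l' = Suc (l - 1 - l')" using assms by auto
  show ?thesis unfolding e fact_Suc by (simp add: divide_simps)
qed

locale symmetric_event_family = prob_space M for M :: "'a measure" +
  fixes E :: "nat \<Rightarrow> 'a set" and N :: nat
  assumes events: "\<And>i. i \<in> {1..N} \<Longrightarrow> E i \<in> sets M"
    and symmetric: "symmetric_events M E N"
begin

abbreviation pattern_prob :: "(nat \<Rightarrow> nat) \<Rightarrow> nat set \<Rightarrow> real" where
  "pattern_prob f A \<equiv> measure M (pattern_event M E f A)"

abbreviation "P \<equiv> prob_fun M E N"
abbreviation "G \<equiv> corr_fun M E N"

lemma pattern_event_sets: "A \<subseteq> {1..N} \<Longrightarrow> pattern_event M E f A \<in> sets M"
  using events by (intro pattern_event_in_sets) (auto intro: finite_subset)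

lemma pattern_prob_empty: "pattern_prob f {} = 1"
  by (simp add: pattern_event_def prob_space)

lemma pattern_prob_split:
  assumes "A \<subseteq> {1..N}" "j \<in> {1..N}" "j \<notin> A"
  shows "pattern_prob f A = pattern_prob (f(j:=0)) (insert j A) + pattern_prob (f(j:=1)) (insert j A)"
proof -
  have "pattern_event M E f A =
      pattern_event M E (f(j:=0)) (insert j A) \<union> pattern_event M E (f(j:=1)) (insert j A)"
    using assms(3) unfolding pattern_event_def by (auto simp: of_bool_def)
  moreover have "pattern_event M E (f(j:=0)) (insert j A) \<inter> pattern_event M E (f(j:=1)) (insert j A) = {}"
    unfolding pattern_event_def by auto
  moreover have "pattern_event M E (f(j:=b)) (insert j A) \<in> sets M" for b
    using assms by (intro pattern_event_sets) auto
  ultimately show ?thesis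
    by (simp add: measure_Union)
qed

lemma joint_prob_eq_pattern_prob: "joint_prob M E N f = pattern_prob f {1..N}"
  unfolding joint_prob_def pattern_event_def by simp

lemma prob_fun_eq_pattern_prob:
  assumes "k \<le> N"
  shows "P k r = pattern_prob r {1..k}"
proof -
  define F where "F = {k+1..N} \<rightarrow>\<^sub>E {0::nat,1}"
  define A where "A t = pattern_event M E (\<lambda>i. if i \<le> k then r i else t i) {1..N}" for t
  have fin: "finite F" unfolding F_def by (intro finite_PiE) auto
  have U: "pattern_event M E r {1..k} = (\<Union>t\<in>F. A t)"
  proof
    show "pattern_event M E r {1..k} \<subseteq> (\<Union>t\<in>F. A t)"
    proof
      fix \<omega> assume \<omega>: "\<omega> \<in> pattern_event M E r {1..k}"
      define t where "t = restrict (\<lambda>i. of_bool (\<omega> \<in> E i) :: nat) {k+1..N}"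
      have "t \<in> F" unfolding t_def F_def by auto
      moreover have "\<omega> \<in> A t" using \<omega> unfolding A_def pattern_event_def t_def by auto
      ultimately show "\<omega> \<in> (\<Union>t\<in>F. A t)" by blast
    qed
    show "(\<Union>t\<in>F. A t) \<subseteq> pattern_event M E r {1..k}"
      unfolding A_def pattern_event_def using assms by auto
  qed
  have disjoint: "disjoint_family_on A F"
    unfolding disjoint_family_on_def
  proof (intro ballI impI)
    fix t t' assume "t \<in> F" "t' \<in> F" "t \<noteq> t'"
    then obtain i where i: "i \<in> {k+1..N}" "t i \<noteq> t' i"
      unfolding F_def by (metis PiE_ext)
    show "A t \<inter> A t' = {}"
    proof (rule ccontr)
      assume "A t \<inter> A t' \<noteq> {}"
      then obtain \<omega> where \<omega>: "\<omega> \<in> A t" "\<omega> \<in> A t'" by blast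
      have i': "i \<in> {1..N}" "\<not> i \<le> k" using i by auto
      have "t i = (of_bool (\<omega> \<in> E i) :: nat)"
        using \<omega>(1) i' unfolding A_def pattern_event_def by force
      moreover have "t' i = (of_bool (\<omega> \<in> E i) :: nat)"
        using \<omega>(2) i' unfolding A_def pattern_event_def by force
      ultimately show False using i(2) by simp
    qed
  qed
  have "pattern_prob r {1..k} = (\<Sum>t\<in>F. measure M (A t))"
    unfolding U by (rule measure_finite_Union[OF fin _ disjoint]) (auto simp: A_def intro!: pattern_event_sets)
  then show ?thesis
    unfolding prob_fun_def F_def A_def joint_prob_eq_pattern_prob by simp
qed

lemma pattern_prob_permute:
  assumes "\<tau> permutes {1..N}" "\<And>i. i \<in> {1..N} \<Longrightarrow> s i \<le> 1"
  shows "pattern_prob (s \<circ> \<tau>) {1..N} = pattern_prob s {1..N}"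
proof -
  have "\<forall>i\<in>{1..N}. s i \<in> {0,1}" using assms(2) by (auto simp: le_Suc_eq)
  then show ?thesis
    using symmetric assms(1) unfolding symmetric_events_def joint_prob_eq_pattern_prob by metis
qed

text \<open>Extend a partial pattern one coordinate at a time, splitting both sides over the two values
  of a coordinate outside the pattern, until it covers all N events; there symmetry applies.\<close>

lemma pattern_prob_bij:
  assumes "A \<subseteq> {1..N}" "B \<subseteq> {1..N}" "bij_betw \<tau> A B"
    and "\<And>i. i \<in> A \<Longrightarrow> f i = s (\<tau> i)" and "\<And>i. i \<in> B \<Longrightarrow> s i \<le> 1"
  shows "pattern_prob f A = pattern_prob s B"
proof -
  obtain n where "card ({1..N} - B) = n" by blast
  then show ?thesis
    using assms
  proof (induction n arbitrary: A B \<tau> f s)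
    case 0
    then have B: "B = {1..N}" by auto
    then have A: "A = {1..N}"
      using 0 bij_betw_same_card[OF "0.prems"(4)] by (simp add: card_subset_eq)
    define \<tau>' where "\<tau>' x = (if x \<in> {1..N} then \<tau> x else x)" for x
    have "bij_betw \<tau>' {1..N} {1..N}"
      using "0.prems"(4) A B by (subst bij_betw_cong[where g=\<tau>]) (auto simp: \<tau>'_def)
    then have \<tau>': "\<tau>' permutes {1..N}"
      by (rule bij_imp_permutes) (auto simp: \<tau>'_def)
    have "pattern_prob f A = pattern_prob (s \<circ> \<tau>') {1..N}"
      unfolding A using "0.prems"(5) A
      by (intro arg_cong[where f="measure M"] pattern_event_cong) (simp add: \<tau>'_def)
    also have "\<dots> = pattern_prob s B"
      unfolding B using "0.prems"(6) B by (intro pattern_prob_permute[OF \<tau>']) auto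
    finally show ?case .
  next
    case (Suc n)
    obtain j where j: "j \<in> {1..N}" "j \<notin> B"
      using Suc.prems(1) by (metis Diff_iff card.empty ex_in_conv nat.distinct(1))
    have "card B < N"
      using Suc.prems(3) j by (metis card_atLeastAtMost diff_Suc_1 finite_atLeastAtMost psubset_card_mono psubsetI)
    moreover have "card A = card B" using Suc.prems(4) bij_betw_same_card by blast
    ultimately have "A \<noteq> {1..N}" by auto
    then obtain j' where j': "j' \<in> {1..N}" "j' \<notin> A" using Suc.prems(2) by blast
    have "bij_betw (\<tau>(j':=j)) A B"
      using Suc.prems(4) j' by (subst bij_betw_cong[where g=\<tau>]) auto
    then have bij: "bij_betw (\<tau>(j':=j)) (insert j' A) (insert j B)"
      using notIn_Un_bij_betw[of j' A "\<tau>(j':=j)" B] j j' by simp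
    have "{1..N} - insert j B = ({1..N} - B) - {j}" "j \<in> {1..N} - B" using j by auto
    then have card: "card ({1..N} - insert j B) = n"
      using Suc.prems(1) by (simp only: card_Diff_singleton)
    have reduce: "pattern_prob (f(j':=b)) (insert j' A) = pattern_prob (s(j:=b)) (insert j B)"
      if "b \<le> 1" for b
    proof (rule Suc.IH[OF card _ _ bij])
      show "insert j' A \<subseteq> {1..N}" "insert j B \<subseteq> {1..N}" using Suc.prems(2,3) j j' by auto
      show "(f(j':=b)) i = (s(j:=b)) ((\<tau>(j':=j)) i)" if "i \<in> insert j' A" for i
      proof (cases "i = j'")
        case False
        then have "i \<in> A" "\<tau> i \<in> B" using that bij_betwE[OF Suc.prems(4)] by auto
        then show ?thesis using False Suc.prems(5) j by auto
      qed simp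
      show "(s(j:=b)) i \<le> 1" if "i \<in> insert j B" for i using Suc.prems(6) \<open>b \<le> 1\<close> that by auto
    qed
    have "pattern_prob f A = pattern_prob (f(j':=0)) (insert j' A) + pattern_prob (f(j':=1)) (insert j' A)"
      using Suc.prems(2) j' by (intro pattern_prob_split) auto
    also have "\<dots> = pattern_prob (s(j:=0)) (insert j B) + pattern_prob (s(j:=1)) (insert j B)"
      using reduce by simp
    also have "\<dots> = pattern_prob s B"
      using Suc.prems(3) j by (intro pattern_prob_split[symmetric]) auto
    finally show ?case .
  qed
qed

definition cluster_term :: "nat \<Rightarrow> (nat \<Rightarrow> nat) \<Rightarrow> (nat \<Rightarrow> nat) \<Rightarrow> nat \<Rightarrow> real" where
  "cluster_term l r \<sigma> l' =
     G l' (r \<circ> \<sigma>) * P (l - l') (\<lambda>i. r (\<sigma> (i + l'))) / (fact (l' - 1) * fact (l - l'))"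

text \<open>A permutation of {2..l} fixes 1, so the argument (r 1, r (\<sigma> 2), ..., r (\<sigma> l')) of
  G l' in the defining recursion is just r \<circ> \<sigma>.\<close>

lemma corr_fun_recursion:
  assumes "1 \<le> l"
  shows "G l r = P l r - (\<Sum>\<sigma>\<in>{\<sigma>. \<sigma> permutes {2..l}}. \<Sum>l'\<in>{1..l-1}. cluster_term l r \<sigma> l')"
proof (cases "l = 1")
  case True
  then show ?thesis by (subst corr_fun.simps) simp
next
  case False
  have "(\<lambda>i. if i = 1 then r 1 else r (\<sigma> i)) = r \<circ> \<sigma>" if "\<sigma> permutes {2..l}" for \<sigma>
    using permutes_not_in[OF that, of 1] by (auto simp: fun_eq_iff)
  then show ?thesis
    using False assms unfolding cluster_term_def
    by (subst corr_fun.simps) (auto intro!: sum.cong simp: field_simps)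
qed

lemma corr_fun_one: "G 1 r = P 1 r"
  using corr_fun_recursion[of 1 r] by simp

lemma prob_fun_cong: "(\<And>i. i \<in> {1..k} \<Longrightarrow> f i = g i) \<Longrightarrow> P k f = P k g"
  unfolding prob_fun_def joint_prob_eq_pattern_prob
  by (intro sum.cong refl arg_cong[where f="measure M"] pattern_event_cong) auto

lemma corr_fun_cong: "1 \<le> l \<Longrightarrow> (\<And>i. i \<in> {1..l} \<Longrightarrow> f i = g i) \<Longrightarrow> G l f = G l g"
proof (induction l arbitrary: f g rule: less_induct)
  case (less l)
  have "cluster_term l f \<sigma> l' = cluster_term l g \<sigma> l'"
    if \<sigma>: "\<sigma> permutes {2..l}" and l': "l' \<in> {1..l-1}" for \<sigma> l'
  proof -
    note \<sigma>_im = permutes_in_atLeastAtMost_one[OF \<sigma>]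
    have "G l' (f \<circ> \<sigma>) = G l' (g \<circ> \<sigma>)"
      using l' \<sigma>_im less.prems(2) by (intro less.IH) auto
    moreover have "P (l - l') (\<lambda>i. f (\<sigma> (i + l'))) = P (l - l') (\<lambda>i. g (\<sigma> (i + l')))"
      using l' \<sigma>_im less.prems(2) by (intro prob_fun_cong) auto
    ultimately show ?thesis unfolding cluster_term_def by simp
  qed
  then show ?case
    using less.prems prob_fun_cong[of l f g] corr_fun_recursion[of l] by simp
qed

lemma corr_fun_permute:
  assumes "\<pi> permutes {2..l}" "1 \<le> l" "l \<le> N" "\<And>i. i \<in> {1..l} \<Longrightarrow> s i \<le> 1"
  shows "G l (s \<circ> \<pi>) = G l s"
proof -
  have "\<pi> permutes {1..l}" using assms(1) by (rule permutes_subset) auto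
  then have "P l (s \<circ> \<pi>) = P l s"
    unfolding prob_fun_eq_pattern_prob[OF assms(3)] using assms
    by (intro pattern_prob_bij[where \<tau>=\<pi>]) (auto intro: permutes_imp_bij)
  moreover have "(\<Sum>\<sigma>\<in>{\<sigma>. \<sigma> permutes {2..l}}. \<Sum>l'\<in>{1..l-1}. cluster_term l s \<sigma> l') =
      (\<Sum>\<sigma>\<in>{\<sigma>. \<sigma> permutes {2..l}}. \<Sum>l'\<in>{1..l-1}. cluster_term l (s \<circ> \<pi>) \<sigma> l')"
    by (subst setum_permutations_compose_left[OF assms(1)]) (simp add: cluster_term_def o_assoc)
  ultimately show ?thesis
    using corr_fun_recursion[OF assms(2), of s] corr_fun_recursion[OF assms(2), of "s \<circ> \<pi>"] by simp
qed

lemma prob_fun_shift: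
  assumes "\<sigma> permutes {2..m}" "m \<le> N" "1 \<le> l'" "l' \<le> m" "\<And>i. i \<in> {1..m} \<Longrightarrow> s i \<le> 1"
  shows "P (m - l') (\<lambda>i. s (\<sigma> (i + l'))) = pattern_prob s (\<sigma> ` {l'+1..m})"
proof -
  have "bij_betw (\<lambda>i. i + l') {1..m-l'} {l'+1..m}"
    by (rule bij_betwI[where g="\<lambda>i. i - l'"]) (use assms in auto)
  moreover have "bij_betw \<sigma> {l'+1..m} (\<sigma> ` {l'+1..m})"
    using permutes_inj[OF assms(1)] by (simp add: bij_betw_def inj_on_def inj_def)
  ultimately have "bij_betw (\<sigma> \<circ> (\<lambda>i. i + l')) {1..m-l'} (\<sigma> ` {l'+1..m})"
    by (rule bij_betw_trans)
  then have "bij_betw (\<lambda>i. \<sigma> (i + l')) {1..m-l'} (\<sigma> ` {l'+1..m})"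
    by (simp add: comp_def)
  moreover have "\<sigma> ` {l'+1..m} \<subseteq> {2..m}"
    using permutes_image[OF assms(1)] assms(3)
    by (metis atLeastatMost_subset_iff image_mono order.refl add_le_mono1 one_add_one)
  ultimately show ?thesis
    unfolding prob_fun_eq_pattern_prob[OF order.trans[OF diff_le_self assms(2)]]
    using assms by (intro pattern_prob_bij) auto
qed

definition flip_antisymmetric :: "nat \<Rightarrow> bool" where
  "flip_antisymmetric l \<longleftrightarrow>
     (\<forall>j s. j \<in> {1..l} \<longrightarrow> (\<forall>i\<in>{1..l}. s i \<le> 1) \<longrightarrow> G l (s(j:=0)) = - G l (s(j:=1)))"

lemma flip_antisymmetricD:
  "flip_antisymmetric l \<Longrightarrow> j \<in> {1..l} \<Longrightarrow> (\<And>i. i \<in> {1..l} \<Longrightarrow> s i \<le> 1) \<Longrightarrow>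
    G l (s(j:=0)) = - G l (s(j:=1))"
  unfolding flip_antisymmetric_def by blast

lemma cluster_term_flip_first:
  assumes flips: "\<And>l'. 2 \<le> l' \<Longrightarrow> l' < l \<Longrightarrow> flip_antisymmetric l'"
    and "l \<le> N" "\<sigma> permutes {2..l}" "l' \<in> {1..l-1}" "\<And>i. i \<in> {1..l} \<Longrightarrow> s i \<le> 1"
  shows "cluster_term l (s(1:=0)) \<sigma> l' + cluster_term l (s(1:=1)) \<sigma> l' =
    (if l' = 1 then pattern_prob s {2..l} / fact (l - 1) else 0)"
proof -
  have "inv \<sigma> 1 = 1" using permutes_not_in[OF permutes_inv[OF assms(3)]] by simp
  then have comp: "s(1:=b) \<circ> \<sigma> = (s \<circ> \<sigma>)(1:=b)" for b
    using fun_upd_comp_permutes[OF assms(3), of s 1 b] by simp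
  have shift: "P (l - l') (\<lambda>i. (s(1:=b)) (\<sigma> (i + l'))) = P (l - l') (\<lambda>i. s (\<sigma> (i + l')))" for b
  proof (rule prob_fun_cong)
    fix i assume "i \<in> {1..l-l'}"
    then have "i + l' \<in> {2..l}" using assms(4) by auto
    then have "\<sigma> (i + l') \<in> {2..l}" by (simp only: permutes_in_image[OF assms(3)])
    then show "(s(1:=b)) (\<sigma> (i + l')) = s (\<sigma> (i + l'))" by auto
  qed
  have terms: "cluster_term l (s(1:=0)) \<sigma> l' + cluster_term l (s(1:=1)) \<sigma> l' =
      (G l' ((s \<circ> \<sigma>)(1:=0)) + G l' ((s \<circ> \<sigma>)(1:=1))) * P (l - l') (\<lambda>i. s (\<sigma> (i + l')))
        / (fact (l' - 1) * fact (l - l'))"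
    unfolding cluster_term_def comp shift by (simp add: add_divide_distrib distrib_right)
  show ?thesis
  proof (cases "l' = 1")
    case True
    have "1 \<le> N" using assms(2,4) by auto
    then have "G 1 ((s \<circ> \<sigma>)(1:=0)) + G 1 ((s \<circ> \<sigma>)(1:=1)) = 1"
      using pattern_prob_split[of "{}" 1 "s \<circ> \<sigma>"]
      unfolding corr_fun_one prob_fun_eq_pattern_prob[OF \<open>1 \<le> N\<close>] by (simp add: pattern_prob_empty)
    moreover have "P (l - 1) (\<lambda>i. s (\<sigma> (i + 1))) = pattern_prob s {2..l}"
    proof -
      have "P (l - 1) (\<lambda>i. s (\<sigma> (i + 1))) = pattern_prob s (\<sigma> ` {1+1..l})"
        using assms(4,5) by (intro prob_fun_shift[OF assms(3,2)]) auto
      also have "\<sigma> ` {1+1..l} = {2..l}" unfolding one_add_one by (rule permutes_image[OF assms(3)])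
      finally show ?thesis .
    qed
    ultimately show ?thesis using terms True by simp
  next
    case False
    have "flip_antisymmetric l'" using flips False assms(4) by auto
    then have "G l' ((s \<circ> \<sigma>)(1:=0)) = - G l' ((s \<circ> \<sigma>)(1:=1))"
      by (rule flip_antisymmetricD) (use assms(4,5) permutes_in_atLeastAtMost_one[OF assms(3)] in auto)
    then show ?thesis using terms False by simp
  qed
qed

lemma corr_fun_flip_first:
  assumes flips: "\<And>l'. 2 \<le> l' \<Longrightarrow> l' < l \<Longrightarrow> flip_antisymmetric l'"
    and "2 \<le> l" "l \<le> N" "\<And>i. i \<in> {1..l} \<Longrightarrow> s i \<le> 1"
  shows "G l (s(1:=0)) = - G l (s(1:=1))"
proof -
  have "{1..l} = insert 1 {2..l}" using assms(2) by auto
  then have marginal: "P l (s(1:=0)) + P l (s(1:=1)) = pattern_prob s {2..l}"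
    using assms(2,3) pattern_prob_split[of "{2..l}" 1 s]
    by (simp add: prob_fun_eq_pattern_prob[OF assms(3)])
  note terms = cluster_term_flip_first[OF flips assms(3) _ _ assms(4)]
  have "G l (s(1:=0)) + G l (s(1:=1)) = P l (s(1:=0)) + P l (s(1:=1)) -
      (\<Sum>\<sigma>\<in>{\<sigma>. \<sigma> permutes {2..l}}. \<Sum>l'\<in>{1..l-1}.
         cluster_term l (s(1:=0)) \<sigma> l' + cluster_term l (s(1:=1)) \<sigma> l')"
    using corr_fun_recursion[of l] assms(2) by (simp add: sum.distrib)
  also have "\<dots> = pattern_prob s {2..l} - (\<Sum>\<sigma>\<in>{\<sigma>. \<sigma> permutes {2..l}}. \<Sum>l'\<in>{1..l-1}.
      if l' = 1 then pattern_prob s {2..l} / fact (l - 1) else 0)"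
    unfolding marginal using terms
    by (intro arg_cong[where f="\<lambda>x. pattern_prob s {2..l} - x"] sum.cong refl) auto
  also have "\<dots> = 0"
    using assms(2) card_permutations[of "{2..l}" "l - 1"] by simp
  finally show ?thesis by simp
qed

lemma cluster_term_flip_last:
  assumes flips: "\<And>l'. 2 \<le> l' \<Longrightarrow> l' < l \<Longrightarrow> flip_antisymmetric l'"
    and "l \<le> N" "\<sigma> permutes {2..l}" "l' \<in> {1..l-1}" "\<And>i. i \<in> {1..l} \<Longrightarrow> s i \<le> 1"
  shows "cluster_term l (s(l:=0)) \<sigma> l' + cluster_term l (s(l:=1)) \<sigma> l' =
    (if l' < inv \<sigma> l
     then G l' (s \<circ> \<sigma>) * pattern_prob s (\<sigma> ` {l'+1..l} - {l}) / (fact (l' - 1) * fact (l - l'))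
     else 0)"
proof -
  define j where "j = inv \<sigma> l"
  have "l \<in> {2..l}" using assms(4) by auto
  then have j: "j \<in> {2..l}"
    unfolding j_def by (simp only: permutes_in_image[OF permutes_inv[OF assms(3)]])
  have \<sigma>_eq_l: "\<sigma> i = l \<longleftrightarrow> i = j" for i
    unfolding j_def using permutes_inv_eq[OF assms(3), of l i] by auto
  have comp: "s(l:=b) \<circ> \<sigma> = (s \<circ> \<sigma>)(j:=b)" for b
    unfolding j_def by (rule fun_upd_comp_permutes[OF assms(3)])
  show ?thesis
  proof (cases "j \<le> l'")
    case True
    have shift: "P (l - l') (\<lambda>i. (s(l:=b)) (\<sigma> (i + l'))) = P (l - l') (\<lambda>i. s (\<sigma> (i + l')))" for b
      using True \<sigma>_eq_l by (intro prob_fun_cong) auto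
    have "flip_antisymmetric l'" using flips True j assms(4) by auto
    then have "G l' ((s \<circ> \<sigma>)(j:=0)) = - G l' ((s \<circ> \<sigma>)(j:=1))"
      by (rule flip_antisymmetricD) (use True j assms(4,5) permutes_in_atLeastAtMost_one[OF assms(3)] in auto)
    then show ?thesis
      using True unfolding cluster_term_def comp shift j_def[symmetric] by simp
  next
    case False
    define B where "B = \<sigma> ` {l'+1..l}"
    have G_eq: "G l' ((s \<circ> \<sigma>)(j:=b)) = G l' (s \<circ> \<sigma>)" for b
      using False assms(4) by (intro corr_fun_cong) auto
    have P0: "P (l - l') (\<lambda>i. (s(l:=0)) (\<sigma> (i + l'))) = pattern_prob (s(l:=0)) B"
      unfolding B_def using assms(2-5) by (intro prob_fun_shift) auto
    have P1: "P (l - l') (\<lambda>i. (s(l:=1)) (\<sigma> (i + l'))) = pattern_prob (s(l:=1)) B"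
      unfolding B_def using assms(2-5) by (intro prob_fun_shift) auto
    have "l \<in> B" unfolding B_def using False j \<sigma>_eq_l[of j] by (auto intro: image_eqI[of l \<sigma> j])
    moreover have "B \<subseteq> {2..l}"
    proof -
      have "{l'+1..l} \<subseteq> {2..l}" using assms(4) by auto
      then show ?thesis unfolding B_def using permutes_image[OF assms(3)] by (metis image_mono)
    qed
    ultimately have "B - {l} \<subseteq> {1..N}" "l \<in> {1..N}" "insert l (B - {l}) = B"
      using assms(2) by auto
    then have "pattern_prob s (B - {l}) = pattern_prob (s(l:=0)) B + pattern_prob (s(l:=1)) B"
      using pattern_prob_split[of "B - {l}" l s] by simp
    then show ?thesis
      using False unfolding cluster_term_def comp G_eq P0 P1
        j_def[symmetric] B_def[symmetric]
      by (simp add: ring_distribs add_divide_distrib)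
  qed
qed

lemma prob_fun_cluster_expansion:
  assumes "1 \<le> m" "m \<le> N" "\<And>i. i \<in> {1..m} \<Longrightarrow> s i \<le> 1"
  shows "(\<Sum>\<rho>\<in>{\<rho>. \<rho> permutes {2..m}}. \<Sum>l'\<in>{1..m}.
      G l' (s \<circ> \<rho>) * pattern_prob s (\<rho> ` {l'+1..m}) / (fact (l' - 1) * fact (m - l'))) = P m s"
proof -
  have "{1..m} = insert m {1..m-1}" using assms(1) by auto
  then have split_top: "(\<Sum>l'\<in>{1..m}. f l') = (\<Sum>l'\<in>{1..m-1}. f l') + f m" for f :: "nat \<Rightarrow> real"
    using assms(1) by simp
  have "(\<Sum>l'\<in>{1..m}. G l' (s \<circ> \<rho>) * pattern_prob s (\<rho> ` {l'+1..m}) / (fact (l' - 1) * fact (m - l')))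
      = (\<Sum>l'\<in>{1..m-1}. cluster_term m s \<rho> l') + G m s / fact (m - 1)"
    if \<rho>: "\<rho> permutes {2..m}" for \<rho>
  proof -
    have "G l' (s \<circ> \<rho>) * pattern_prob s (\<rho> ` {l'+1..m}) / (fact (l' - 1) * fact (m - l'))
        = cluster_term m s \<rho> l'" if "l' \<in> {1..m-1}" for l'
    proof -
      have "P (m - l') (\<lambda>i. s (\<rho> (i + l'))) = pattern_prob s (\<rho> ` {l'+1..m})"
        using that assms(3) by (intro prob_fun_shift[OF \<rho> assms(2)]) auto
      then show ?thesis unfolding cluster_term_def by simp
    qed
    moreover have "G m (s \<circ> \<rho>) = G m s"
      using corr_fun_permute[OF \<rho> assms] .
    ultimately show ?thesis
      unfolding split_top by (simp add: pattern_prob_empty)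
  qed
  then have "(\<Sum>\<rho>\<in>{\<rho>. \<rho> permutes {2..m}}. \<Sum>l'\<in>{1..m}.
      G l' (s \<circ> \<rho>) * pattern_prob s (\<rho> ` {l'+1..m}) / (fact (l' - 1) * fact (m - l')))
      = (\<Sum>\<rho>\<in>{\<rho>. \<rho> permutes {2..m}}. \<Sum>l'\<in>{1..m-1}. cluster_term m s \<rho> l') + G m s"
    using card_permutations[of "{2..m}" "m - 1"] by (simp add: sum.distrib)
  also have "\<dots> = P m s"
    using corr_fun_recursion[OF assms(1), of s] by simp
  finally show ?thesis .
qed

lemma marginal_cluster_sum:
  assumes "2 \<le> l" "l \<le> N" "\<And>i. i \<in> {1..l} \<Longrightarrow> s i \<le> 1"
  shows "(\<Sum>\<sigma>\<in>{\<sigma>. \<sigma> permutes {2..l}}. \<Sum>l'\<in>{1..l-1}.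
      if l' < inv \<sigma> l
      then G l' (s \<circ> \<sigma>) * pattern_prob s (\<sigma> ` {l'+1..l} - {l}) / (fact (l' - 1) * fact (l - l'))
      else 0) = P (l - 1) s"
    (is "(\<Sum>\<sigma>\<in>_. \<Sum>l'\<in>_. ?term \<sigma> l') = _")
proof -
  define Y where "Y \<rho> l' =
    G l' (s \<circ> \<rho>) * pattern_prob s (\<rho> ` {l'+1..l-1}) / (fact (l' - 1) * fact (l - l'))" for \<rho> l'
  have decompose: "?term (\<rho> \<circ> Transposition.transpose l b) l' = (if l' < b then Y \<rho> l' else 0)"
    if \<rho>: "\<rho> permutes {2..l-1}" and b: "b \<in> {2..l}" and l': "l' \<in> {1..l-1}" for \<rho> b l'
  proof -
    define \<sigma> where "\<sigma> = \<rho> \<circ> Transposition.transpose l b"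
    have \<rho>_l: "\<rho> l = l" by (rule permutes_not_in[OF \<rho>]) (use assms(1) in auto)
    have "\<rho> permutes {2..l}" using \<rho> by (rule permutes_subset) auto
    then have "\<sigma> permutes {2..l}"
      unfolding \<sigma>_def using b assms(1) by (intro permutes_compose permutes_swap_id) auto
    then have inv_l: "inv \<sigma> l = b" using \<rho>_l by (simp add: permutes_inv_eq \<sigma>_def)
    show ?thesis
    proof (cases "l' < b")
      case True
      have "G l' (s \<circ> \<sigma>) = G l' (s \<circ> \<rho>)"
        using True l' by (intro corr_fun_cong) (auto simp: \<sigma>_def)
      moreover have "\<sigma> ` {l'+1..l} - {l} = \<rho> ` {l'+1..l-1}"
      proof -
        have "Transposition.transpose l b ` {l'+1..l} = {l'+1..l}"
          using True b l' by (intro transpose_image_eq) auto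
        moreover have "{l'+1..l} = insert l {l'+1..l-1}" using l' by auto
        ultimately have "\<sigma> ` {l'+1..l} = insert l (\<rho> ` {l'+1..l-1})"
          unfolding \<sigma>_def image_comp[symmetric] using \<rho>_l by (metis image_insert)
        moreover have "l \<notin> \<rho> ` {l'+1..l-1}"
        proof -
          have "\<rho> ` {l'+1..l-1} \<subseteq> {2..l-1}"
            using l' permutes_image[OF \<rho>] image_mono[of "{l'+1..l-1}" "{2..l-1}" \<rho>] by auto
          then show ?thesis using assms(1) by auto
        qed
        ultimately show ?thesis by (simp add: Diff_insert_absorb)
      qed
      ultimately show ?thesis using True inv_l unfolding Y_def by (simp add: \<sigma>_def[symmetric])
    qed (simp add: inv_l \<sigma>_def[symmetric])
  qed
  have count: "(\<Sum>b\<in>{2..l}. if l' < b then Y \<rho> l' else 0) = real (l - l') * Y \<rho> l'"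
    if "l' \<in> {1..l-1}" for \<rho> l'
  proof -
    have "(\<Sum>b\<in>{2..l}. if l' < b then Y \<rho> l' else 0) = (\<Sum>b\<in>{b\<in>{2..l}. l' < b}. Y \<rho> l')"
      by (rule sum.inter_filter[symmetric]) simp
    also have "{b\<in>{2..l}. l' < b} = {l'+1..l}" using that by auto
    finally show ?thesis by simp
  qed
  have ins: "{2..l} = insert l {2..l-1}" "l \<notin> {2..l-1}" using assms(1) by auto
  have "(\<Sum>\<sigma>\<in>{\<sigma>. \<sigma> permutes {2..l}}. \<Sum>l'\<in>{1..l-1}. ?term \<sigma> l') =
      (\<Sum>b\<in>{2..l}. \<Sum>\<rho>\<in>{\<rho>. \<rho> permutes {2..l-1}}. \<Sum>l'\<in>{1..l-1}.
         ?term (\<rho> \<circ> Transposition.transpose l b) l')"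
    unfolding ins(1) by (rule sum_permutes_insert_transpose) (use ins(2) in auto)
  also have "\<dots> = (\<Sum>b\<in>{2..l}. \<Sum>\<rho>\<in>{\<rho>. \<rho> permutes {2..l-1}}. \<Sum>l'\<in>{1..l-1}.
      if l' < b then Y \<rho> l' else 0)"
    using decompose by (intro sum.cong refl) auto
  also have "\<dots> = (\<Sum>\<rho>\<in>{\<rho>. \<rho> permutes {2..l-1}}. \<Sum>l'\<in>{1..l-1}. \<Sum>b\<in>{2..l}.
      if l' < b then Y \<rho> l' else 0)"
    by (subst sum.swap) (rule sum.cong[OF refl], rule sum.swap)
  also have "\<dots> = (\<Sum>\<rho>\<in>{\<rho>. \<rho> permutes {2..l-1}}. \<Sum>l'\<in>{1..l-1}. real (l - l') * Y \<rho> l')"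
    using count by (intro sum.cong refl) simp
  also have "\<dots> = (\<Sum>\<rho>\<in>{\<rho>. \<rho> permutes {2..l-1}}. \<Sum>l'\<in>{1..l-1}.
      G l' (s \<circ> \<rho>) * pattern_prob s (\<rho> ` {l'+1..l-1}) / (fact (l' - 1) * fact (l - 1 - l')))"
    unfolding Y_def by (intro sum.cong refl fact_diff_ratio) auto
  also have "\<dots> = P (l - 1) s"
    using assms by (intro prob_fun_cluster_expansion) auto
  finally show ?thesis .
qed

lemma corr_fun_flip_last:
  assumes flips: "\<And>l'. 2 \<le> l' \<Longrightarrow> l' < l \<Longrightarrow> flip_antisymmetric l'"
    and "2 \<le> l" "l \<le> N" "\<And>i. i \<in> {1..l} \<Longrightarrow> s i \<le> 1"
  shows "G l (s(l:=0)) = - G l (s(l:=1))"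
proof -
  have "{1..l} = insert l {1..l-1}" using assms(2) by auto
  then have marginal: "P l (s(l:=0)) + P l (s(l:=1)) = P (l - 1) s"
    using assms(2,3) pattern_prob_split[of "{1..l-1}" l s]
    by (simp add: prob_fun_eq_pattern_prob)
  note terms = cluster_term_flip_last[OF flips assms(3) _ _ assms(4)]
  have "G l (s(l:=0)) + G l (s(l:=1)) = P l (s(l:=0)) + P l (s(l:=1)) -
      (\<Sum>\<sigma>\<in>{\<sigma>. \<sigma> permutes {2..l}}. \<Sum>l'\<in>{1..l-1}.
         cluster_term l (s(l:=0)) \<sigma> l' + cluster_term l (s(l:=1)) \<sigma> l')"
    using corr_fun_recursion[of l] assms(2) by (simp add: sum.distrib)
  also have "\<dots> = P (l - 1) s - (\<Sum>\<sigma>\<in>{\<sigma>. \<sigma> permutes {2..l}}. \<Sum>l'\<in>{1..l-1}.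
      if l' < inv \<sigma> l
      then G l' (s \<circ> \<sigma>) * pattern_prob s (\<sigma> ` {l'+1..l} - {l}) / (fact (l' - 1) * fact (l - l'))
      else 0)"
    unfolding marginal using terms
    by (intro arg_cong[where f="\<lambda>x. P (l - 1) s - x"] sum.cong refl) auto
  also have "\<dots> = 0"
    using marginal_cluster_sum[OF assms(2-4)] by simp
  finally show ?thesis by simp
qed

lemma flip_antisymmetric_corr_fun: "2 \<le> l \<Longrightarrow> l \<le> N \<Longrightarrow> flip_antisymmetric l"
proof (induction l rule: less_induct)
  case (less l)
  have flips: "flip_antisymmetric l'" if "2 \<le> l'" "l' < l" for l'
    using less that by auto
  show ?case unfolding flip_antisymmetric_def
  proof (intro allI impI)
    fix j and s :: "nat \<Rightarrow> nat" assume j: "j \<in> {1..l}" and s: "\<forall>i\<in>{1..l}. s i \<le> 1"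
    consider "j = 1" | "j = l" | "1 < j" "j < l" using j by fastforce
    then show "G l (s(j:=0)) = - G l (s(j:=1))"
    proof cases
      case 1
      then show ?thesis using corr_fun_flip_first[OF flips less.prems] s by blast
    next
      case 2
      then show ?thesis using corr_fun_flip_last[OF flips less.prems] s by blast
    next
      case 3
      define \<tau> where "\<tau> = Transposition.transpose j l"
      have \<tau>: "\<tau> permutes {2..l}" unfolding \<tau>_def using 3 by (intro permutes_swap_id) auto
      have "G l (s(j:=b)) = G l ((s \<circ> \<tau>)(l:=b))" if "b \<le> 1" for b
      proof -
        have "s(j:=b) \<circ> \<tau> = (s \<circ> \<tau>)(l:=b)"
          using fun_upd_comp_permutes[OF \<tau>, of s j b] by (simp add: \<tau>_def)
        moreover have "G l (s(j:=b) \<circ> \<tau>) = G l (s(j:=b))"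
          using s that less.prems by (intro corr_fun_permute[OF \<tau>]) auto
        ultimately show ?thesis by simp
      qed
      moreover have "G l ((s \<circ> \<tau>)(l:=0)) = - G l ((s \<circ> \<tau>)(l:=1))"
        using s permutes_in_atLeastAtMost_one[OF \<tau>] by (intro corr_fun_flip_last[OF flips less.prems]) auto
      ultimately show ?thesis by simp
    qed
  qed
qed

lemma corr_fun_sign:
  assumes "2 \<le> k" "k \<le> N" "\<And>i. i \<in> {1..k} \<Longrightarrow> r i \<in> {0,1}"
  shows "G k r = (\<Prod>l=1..k. (-1::real) ^ (r l + 1)) * G k (\<lambda>_. 1)"
proof -
  define t where "t m = (\<lambda>i. if i \<in> {1..m} then 1 else r i)" for m
  have "G k r = (\<Prod>l=1..m. (-1::real) ^ (r l + 1)) * G k (t m)" if "m \<le> k" for m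
    using that
  proof (induction m)
    case 0
    have "t 0 = r" by (simp add: t_def)
    then show ?case by simp
  next
    case (Suc m)
    have binary: "t m i \<le> 1" if "i \<in> {1..k}" for i
      using assms(3)[OF that] by (auto simp: t_def)
    have t_Suc: "t (Suc m) = (t m)(Suc m := 1)" and t_m: "t m = (t m)(Suc m := r (Suc m))"
      by (auto simp: t_def fun_eq_iff)
    have "G k (t m) = (-1::real) ^ (r (Suc m) + 1) * G k (t (Suc m))"
    proof (cases "r (Suc m) = 0")
      case True
      have "G k ((t m)(Suc m := 0)) = - G k ((t m)(Suc m := 1))"
        using flip_antisymmetric_corr_fun[OF assms(1,2)] Suc.prems binary
        unfolding flip_antisymmetric_def by simp
      then show ?thesis using True t_Suc t_m by (metis power_one_right add_0 mult_minus1)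
    next
      case False
      then have "r (Suc m) = 1" using assms(3)[of "Suc m"] Suc.prems by auto
      then show ?thesis using t_Suc t_m by simp
    qed
    then show ?case using Suc by (simp add: mult.assoc)
  qed
  from this[of k] have "G k r = (\<Prod>l=1..k. (-1::real) ^ (r l + 1)) * G k (t k)" by simp
  moreover have "G k (t k) = G k (\<lambda>_. 1)"
    using assms(1) by (intro corr_fun_cong) (auto simp: t_def)
  ultimately show ?thesis by simp
qed

end

theorem mainTheorem5:
  fixes M :: "'a measure" and E :: "nat \<Rightarrow> 'a set" and N k :: nat and r :: "nat \<Rightarrow> nat"
  assumes "prob_space M"
    and "\<And>i. i \<in> {1..N} \<Longrightarrow> E i \<in> sets M"
    and "symmetric_events M E N"
    and "2 \<le> k" and "k \<le> N"
    and "\<And>i. i \<in> {1..k} \<Longrightarrow> r i \<in> {0,1}"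
  shows "corr_fun M E N k r =
           inverse (real N ^ k) * corr_coeff M E N k * (\<Prod>l=1..k. (-1::real) ^ (r l + 1))"
proof -
  interpret symmetric_event_family M E N
    using assms(1-3) by (simp add: symmetric_event_family_def symmetric_event_family_axioms_def)
  have "real N ^ k \<noteq> 0" using assms(4,5) by simp
  then have "inverse (real N ^ k) * corr_coeff M E N k = G k (\<lambda>_. 1)"
    unfolding corr_coeff_def by simp
  then show ?thesis
    using corr_fun_sign[OF assms(4-6)] by (simp add: mult.commute)
qed

end
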